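(* For every $\theta\in\mathbb{R}$, integer $m\ge1$, $x=x_1\cdots x_m\in\{0,1\}^m$ and one-qubit state $|\psi\rangle$, $$\langle x|_{1\ldots m}\,(M_{m,\theta}^\dagger)_{1\ldots m}\prod_{i=1}^m\mathrm{CNOT}_{i,m+1}\,|+\rangle^{\otimes m}\otimes|\psi\rangle=\langle x|_{1\ldots m}\prod_{i=1}^m(A_\theta^\dagger)_i\,\mathrm{CNOT}_{i,m+1}\,|+\rangle^{\otimes m}\otimes|\psi\rangle .$$
   Context: $X$ is the Pauli-$X$ matrix, $|+\rangle=(|0\rangle+|1\rangle)/\sqrt2$, $\mathrm{CNOT}_{i,j}$ has control $i$ and target $j$, and $\langle x|_{1\ldots m}$ is the partial inner product on qubits $1,\dots,m$. $A_\theta=|0\rangle\langle0|+e^{-i\theta X}|1\rangle\langle1|$. $M_{m,\theta}$ is the (non-unitary) $m$-qubit operator defined on basis states by $M_{m,\theta}|x_1\cdots x_m\rangle=\bigotimes_{j=1}^m e^{-i\theta x_{j-1}X}|x_j\rangle$, with indices mod $m$ (so $x_0=x_m$). *)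

theory Defs
  imports Complex_Main
begin

text \<open>An n-qubit computational basis state |b_1 ... b_n> is a list b of
  booleans of length n (qubit i, 1-indexed, is b ! (i-1); False = 0, True = 1).
  An n-qubit vector is a function from such lists to complex amplitudes, and an
  n-qubit operator is given by its matrix entries U y x = <y|U|x>.\<close>

definition basis :: "nat \<Rightarrow> bool list set" where
  "basis n = {xs. length xs = n}"

type_synonym qvec = "bool list \<Rightarrow> complex"
type_synonym qop = "bool list \<Rightarrow> bool list \<Rightarrow> complex"

definition apply_op :: "nat \<Rightarrow> qop \<Rightarrow> qvec \<Rightarrow> qvec" where
  "apply_op n U v = (\<lambda>y. \<Sum>x\<in>basis n. U y x * v x)"

definition dagger :: "('a \<Rightarrow> 'a \<Rightarrow> complex) \<Rightarrow> 'a \<Rightarrow> 'a \<Rightarrow> complex" where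
  "dagger U = (\<lambda>y x. cnj (U x y))"

definition kdelta :: "'a \<Rightarrow> 'a \<Rightarrow> complex" where
  "kdelta a b = (if a = b then 1 else 0)"

text \<open>Pauli X and exp(-i theta X) = cos theta I - i sin theta X (written out).\<close>
definition pauliX :: "bool \<Rightarrow> bool \<Rightarrow> complex" where
  "pauliX a b = (if a \<noteq> b then 1 else 0)"

definition expX :: "real \<Rightarrow> bool \<Rightarrow> bool \<Rightarrow> complex" where
  "expX \<theta> a b = complex_of_real (cos \<theta>) * kdelta a b - \<i> * complex_of_real (sin \<theta>) * pauliX a b"

text \<open>A_theta = |0><0| + exp(-i theta X)|1><1|.\<close>
definition A_op :: "real \<Rightarrow> bool \<Rightarrow> bool \<Rightarrow> complex" where
  "A_op \<theta> a b = (if b then expX \<theta> a True else kdelta a False)"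

definition gate1 :: "nat \<Rightarrow> nat \<Rightarrow> (bool \<Rightarrow> bool \<Rightarrow> complex) \<Rightarrow> qop" where
  "gate1 n i G = (\<lambda>y x. G (y ! (i-1)) (x ! (i-1)) *
      (\<Prod>j\<in>{..<n} - {i-1}. kdelta (y ! j) (x ! j)))"

definition CNOT :: "nat \<Rightarrow> nat \<Rightarrow> qop" where
  "CNOT c t = (\<lambda>y x. kdelta y (x[t-1 := (x ! (t-1) \<noteq> x ! (c-1))]))"

text \<open>M_{m,theta} |x_1...x_m> = tensor_j exp(-i theta x_{j-1} X)|x_j>, indices mod m.
  (0-indexed: qubit j is controlled by qubit (j-1) mod m.)\<close>
definition M_op :: "nat \<Rightarrow> real \<Rightarrow> qop" where
  "M_op m \<theta> = (\<lambda>y x. \<Prod>j<m.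
      expX (if x ! ((j + m - 1) mod m) then \<theta> else 0) (y ! j) (x ! j))"

definition on_first :: "nat \<Rightarrow> qop \<Rightarrow> qop" where
  "on_first m U = (\<lambda>y x. U (take m y) (take m x) * kdelta (y ! m) (x ! m))"

text \<open>|+>^{tensor m} tensor |psi>.\<close>
definition plus_psi :: "nat \<Rightarrow> (bool \<Rightarrow> complex) \<Rightarrow> qvec" where
  "plus_psi m \<psi> = (\<lambda>x. complex_of_real ((1 / sqrt 2) ^ m) * \<psi> (x ! m))"

definition partial_bra :: "bool list \<Rightarrow> qvec \<Rightarrow> bool \<Rightarrow> complex" where
  "partial_bra x v = (\<lambda>b. v (x @ [b]))"

text \<open>Ordered product prod_{i=1}^m F_i applied to v, i.e. F_1 (F_2 (... (F_m v))).\<close>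
definition prod_apply :: "nat \<Rightarrow> (nat \<Rightarrow> qvec \<Rightarrow> qvec) \<Rightarrow> qvec \<Rightarrow> qvec" where
  "prod_apply m F v = foldr F [1..<m+1] v"

end

theory Submission
  imports Defs
begin

text \<open>Both sides are computed in closed form. After the CNOT ladder the target qubit carries
  the parity of the control register, so each side, read off at \<open>x @ [b]\<close>, is
  \<open>2^(-m/2)\<close> times an XOR-convolution \<open>\<Sum>\<^sub>w (\<Prod>\<^sub>j f\<^sub>j(w\<^sub>j)) \<psi>(b \<oplus> parity w)\<close> of
  column entries of the respective gates. The characters \<open>b \<mapsto> (\<plusminus>1)^b\<close> of \<open>\<int>\<^sub>2\<close> turn such a
  convolution into the product \<open>\<Prod>\<^sub>j (f\<^sub>j(0) \<plusminus> f\<^sub>j(1))\<close> times the corresponding coefficient of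
  \<open>\<psi>\<close>. For \<open>M\<^sup>\<dagger>\<close> and for \<open>\<Prod>\<^sub>i A\<^sup>\<dagger>\<^sub>i\<close> these coefficients are \<open>e^{\<plusminus>i\<theta> x\<^sub>j}\<close> up to the
  signs \<open>(-1)^{x\<^sub>j}\<close>, the only difference being the cyclic shift \<open>x\<^sub>j \<leftrightarrow> x\<^sub>j\<^sub>-\<^sub>1\<close>,
  which does not change the product over all \<open>j\<close>.\<close>

lemma finite_basis [simp]: "finite (basis n)"
proof -
  have "basis n = {xs. set xs \<subseteq> (UNIV::bool set) \<and> length xs = n}" by (auto simp: basis_def)
  thus ?thesis using finite_lists_length_eq[of "UNIV::bool set" n] by simp
qed

lemma basis_0: "basis 0 = {[]}"
  by (auto simp: basis_def)

lemma sum_basis_Suc_Cons: "(\<Sum>z\<in>basis (Suc n). h z) = (\<Sum>a\<in>UNIV. \<Sum>w\<in>basis n. h (a # w))"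
proof -
  have "basis (Suc n) = (\<lambda>(a,w). a # w) ` (UNIV \<times> basis n)"
    by (auto simp: basis_def length_Suc_conv image_iff)
  moreover have "inj_on (\<lambda>(a,w). a # w) (UNIV \<times> basis n)" by (auto simp: inj_on_def)
  ultimately show ?thesis
    by (simp add: sum.reindex sum.cartesian_product prod.case_distrib)
qed

lemma sum_basis_Suc_snoc: "(\<Sum>z\<in>basis (Suc n). h z) = (\<Sum>a\<in>UNIV. \<Sum>w\<in>basis n. h (w @ [a]))"
proof -
  have "basis (Suc n) = (\<lambda>(a,w). w @ [a]) ` (UNIV \<times> basis n)"
  proof (auto simp: basis_def image_iff)
    fix z :: "bool list" assume "length z = Suc n"
    then show "\<exists>a w. length w = n \<and> z = w @ [a]"
      by (metis append_butlast_last_id diff_Suc_1 length_butlast list.size(3) nat.distinct(1))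
  qed
  moreover have "inj_on (\<lambda>(a,w). w @ [a]) (UNIV \<times> basis n)" by (auto simp: inj_on_def)
  ultimately show ?thesis
    by (simp add: sum.reindex sum.cartesian_product prod.case_distrib)
qed

lemma prod_kdelta:
  "finite J \<Longrightarrow> (\<Prod>j\<in>J. kdelta (f j) (g j)) = (if \<forall>j\<in>J. f j = g j then 1 else 0)"
  by (induction J rule: finite_induct) (auto simp: kdelta_def)

lemma prod_lessThan_rotate:
  fixes h :: "nat \<Rightarrow> 'a::comm_monoid_mult"
  assumes "m \<ge> 1"
  shows "(\<Prod>j<m. h ((j + m - 1) mod m)) = (\<Prod>j<m. h j)"
proof -
  obtain n where m: "m = Suc n" using assms by (cases m) auto
  have "(\<Prod>j<Suc n. h ((j + Suc n - 1) mod Suc n)) = h n * (\<Prod>j<n. h ((j + Suc n) mod Suc n))"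
    by (simp add: prod.lessThan_Suc_shift del: prod.lessThan_Suc)
  also have "(\<Prod>j<n. h ((j + Suc n) mod Suc n)) = (\<Prod>j<n. h j)"
    by (intro prod.cong refl) (metis lessThan_iff less_SucI mod_add_self2 mod_less)
  finally show ?thesis using m by (simp add: mult.commute)
qed

subsection \<open>The gates on basis states\<close>

lemma apply_CNOT_last:
  assumes "length y = Suc m" "i - 1 < m"
  shows "apply_op (Suc m) (CNOT i (Suc m)) v y = v (y[m := (y ! m \<noteq> y ! (i - 1))])"
proof -
  let ?f = "\<lambda>x::bool list. x[m := (x ! m \<noteq> x ! (i - 1))]"
  have involution: "?f (?f z) = z" if "length z = Suc m" for z
  proof -
    have "((z ! m = (\<not> z ! (i - 1))) = (\<not> z ! (i - 1))) = z ! m" by auto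
    then show ?thesis using that assms by simp
  qed
  have "kdelta y (?f x) * v x = (if x = ?f y then v x else 0)" if "x \<in> basis (Suc m)" for x
  proof -
    have "(y = ?f x) = (x = ?f y)"
      using that assms involution[of x] involution[of y] by (auto simp: basis_def)
    thus ?thesis by (auto simp: kdelta_def)
  qed
  then have "apply_op (Suc m) (CNOT i (Suc m)) v y = (\<Sum>x\<in>basis (Suc m). if x = ?f y then v x else 0)"
    unfolding apply_op_def CNOT_def by (auto intro: sum.cong)
  also have "\<dots> = v (?f y)"
  proof -
    have "?f y \<in> basis (Suc m)" using assms by (simp add: basis_def)
    then show ?thesis by (simp only: sum.delta[OF finite_basis] if_True)
  qed
  finally show ?thesis .
qed

lemma apply_gate1:
  assumes "length y = n" "i - 1 < n"
  shows "apply_op n (gate1 n i G) v y = (\<Sum>a\<in>UNIV. G (y ! (i-1)) a * v (y[i-1 := a]))"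
proof -
  define k where "k = i - 1"
  let ?line = "range (\<lambda>a. y[k := a])"
  have "gate1 n i G y x * v x = (if x \<in> ?line then G (y ! k) (x ! k) * v x else 0)"
    if "x \<in> basis n" for x
  proof -
    have "(\<forall>j\<in>{..<n} - {k}. y ! j = x ! j) = (x \<in> ?line)"
      using that assms by (auto simp: k_def basis_def list_eq_iff_nth_eq nth_list_update image_iff)
    thus ?thesis by (simp add: gate1_def k_def prod_kdelta)
  qed
  then have "apply_op n (gate1 n i G) v y = (\<Sum>x\<in>basis n \<inter> ?line. G (y ! k) (x ! k) * v x)"
    unfolding apply_op_def sum.inter_restrict[OF finite_basis] by (auto intro: sum.cong)
  also have "basis n \<inter> ?line = ?line"
    using assms by (auto simp: basis_def)
  also have "(\<Sum>x\<in>?line. G (y ! k) (x ! k) * v x) = (\<Sum>a\<in>UNIV. G (y ! k) a * v (y[k := a]))"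
  proof -
    have "inj (\<lambda>a. y[k := a])"
      using assms by (auto simp: k_def inj_on_def list_eq_iff_nth_eq nth_list_update)
    thus ?thesis using assms by (simp add: k_def sum.reindex)
  qed
  finally show ?thesis unfolding k_def .
qed

subsection \<open>XOR-convolutions and their characters\<close>

fun parity :: "bool list \<Rightarrow> bool" where
  "parity [] = False"
| "parity (a # w) = (a \<noteq> parity w)"

definition xor_conv :: "nat \<Rightarrow> (nat \<Rightarrow> bool \<Rightarrow> complex) \<Rightarrow> (bool \<Rightarrow> complex) \<Rightarrow> bool \<Rightarrow> complex" where
  "xor_conv n f \<phi> b = (\<Sum>w\<in>basis n. (\<Prod>j<n. f j (w ! j)) * \<phi> (b \<noteq> parity w))"

lemma xor_conv_0: "xor_conv 0 f \<phi> b = \<phi> b"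
  by (simp add: xor_conv_def basis_0)

lemma xor_conv_Suc:
  "xor_conv (Suc n) f \<phi> b = (\<Sum>a\<in>UNIV. f 0 a * xor_conv n (\<lambda>j. f (Suc j)) \<phi> (b \<noteq> a))"
proof -
  have "\<phi> (b \<noteq> parity (a # w)) = \<phi> ((b \<noteq> a) \<noteq> parity w)" for a w
    by (cases b; cases a) simp_all
  then show ?thesis
    unfolding xor_conv_def sum_basis_Suc_Cons prod.lessThan_Suc_shift
    by (simp only: nth_Cons_0 nth_Cons_Suc sum_distrib_left mult.assoc)
qed

lemma xor_conv_cong:
  "(\<And>j a. j < n \<Longrightarrow> f j a = g j a) \<Longrightarrow> xor_conv n f \<phi> b = xor_conv n g \<phi> b"
  unfolding xor_conv_def by (auto intro!: sum.cong prod.cong)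

lemma xor_conv_character:
  assumes "s * s = 1"
  shows "xor_conv n f \<phi> False + s * xor_conv n f \<phi> True
       = (\<Prod>j<n. f j False + s * f j True) * (\<phi> False + s * \<phi> True)"
proof (induction n arbitrary: f)
  case 0
  then show ?case by (simp add: xor_conv_0)
next
  case (Suc n)
  let ?S = "xor_conv n (\<lambda>j. f (Suc j)) \<phi>"
  have "?S True + s * ?S False = s * (?S False + s * ?S True)"
    using assms by (simp add: algebra_simps flip: mult.assoc)
  then have "xor_conv (Suc n) f \<phi> False + s * xor_conv (Suc n) f \<phi> True
      = (f 0 False + s * f 0 True) * (?S False + s * ?S True)"
    by (simp add: xor_conv_Suc UNIV_bool algebra_simps)
  then show ?case
    unfolding prod.lessThan_Suc_shift by (simp add: Suc.IH mult.assoc)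
qed

lemma bool_fun_eqI:
  fixes u w :: "bool \<Rightarrow> 'a::field_char_0"
  assumes "u False + u True = w False + w True" and "u False - u True = w False - w True"
  shows "u b = w b"
proof -
  have "u c = ((u False + u True) + (if c then -1 else 1) * (u False - u True)) / 2"
    and "w c = ((w False + w True) + (if c then -1 else 1) * (w False - w True)) / 2" for c
    by (cases c; simp add: field_simps)+
  then show ?thesis using assms by metis
qed

lemma xor_conv_eqI:
  assumes "(\<Prod>j<n. f j False + f j True) = (\<Prod>j<n. g j False + g j True)"
    and "(\<Prod>j<n. f j False - f j True) = (\<Prod>j<n. g j False - g j True)"
  shows "xor_conv n f \<phi> b = xor_conv n g \<phi> b"
proof (rule bool_fun_eqI)
  show "xor_conv n f \<phi> False + xor_conv n f \<phi> True = xor_conv n g \<phi> False + xor_conv n g \<phi> True"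
    using assms(1) xor_conv_character[of 1 n f \<phi>] xor_conv_character[of 1 n g \<phi>] by simp
  show "xor_conv n f \<phi> False - xor_conv n f \<phi> True = xor_conv n g \<phi> False - xor_conv n g \<phi> True"
    using assms(2) xor_conv_character[of "-1" n f \<phi>] xor_conv_character[of "-1" n g \<phi>] by simp
qed

subsection \<open>The two circuits applied to \<open>|+\<rangle>\<^sup>\<otimes>\<^sup>m \<otimes> |\<psi>\<rangle>\<close>\<close>

lemma CNOT_ladder_plus_psi:
  assumes "k \<le> m" "length y = Suc m"
  shows "foldr (\<lambda>i v. apply_op (m+1) (CNOT i (m+1)) v) [Suc k..<m+1] (plus_psi m \<psi>) y
     = complex_of_real ((1 / sqrt 2) ^ m) * \<psi> (y ! m \<noteq> parity (drop k (take m y)))"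
  using assms
proof (induction "m - k" arbitrary: k y)
  case 0
  then show ?case by (simp add: plus_psi_def)
next
  case (Suc d)
  then have km: "k < m" by simp
  let ?y = "y[m := (y ! m \<noteq> y ! k)]"
  have IH: "foldr (\<lambda>i v. apply_op (m+1) (CNOT i (m+1)) v) [Suc (Suc k)..<m+1] (plus_psi m \<psi>) ?y
     = complex_of_real ((1 / sqrt 2) ^ m) * \<psi> (?y ! m \<noteq> parity (drop (Suc k) (take m y)))"
    using Suc km by simp
  have "drop k (take m y) = y ! k # drop (Suc k) (take m y)"
    using km Suc(4) by (metis Cons_nth_drop_Suc length_take min.absorb4 lessI less_Suc_eq nth_take)
  moreover have "[Suc k..<m+1] = Suc k # [Suc (Suc k)..<m+1]"
    using km by (simp add: upt_conv_Cons)
  ultimately show ?case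
    using apply_CNOT_last[of y m "Suc k"] Suc(4) km IH
    by (cases "y ! m"; cases "y ! k") (simp_all del: upt_Suc)
qed

lemma gate_CNOT_ladder_plus_psi:
  assumes "k \<le> m" "length y = Suc m"
  shows "foldr (\<lambda>i v. apply_op (m+1) (gate1 (m+1) i G) (apply_op (m+1) (CNOT i (m+1)) v))
           [Suc k..<m+1] (plus_psi m \<psi>) y
     = complex_of_real ((1 / sqrt 2) ^ m) * xor_conv (m - k) (\<lambda>j a. G (y ! (k + j)) a) \<psi> (y ! m)"
  using assms
proof (induction "m - k" arbitrary: k y)
  case 0
  then show ?case by (simp add: plus_psi_def xor_conv_0)
next
  case (Suc d)
  then have km: "k < m" by simp
  let ?c = "complex_of_real ((1 / sqrt 2) ^ m)"
  let ?F = "\<lambda>i v. apply_op (m+1) (gate1 (m+1) i G) (apply_op (m+1) (CNOT i (m+1)) v)"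
  let ?R = "foldr ?F [Suc (Suc k)..<m+1] (plus_psi m \<psi>)"
  let ?S = "xor_conv (m - Suc k) (\<lambda>j a. G (y ! (k + Suc j)) a) \<psi>"
  have IH: "?R (y[k := a, m := (y ! m \<noteq> a)]) = ?c * ?S (y ! m \<noteq> a)" for a
  proof -
    have "xor_conv (m - Suc k) (\<lambda>j. G (y[k := a, m := (y ! m \<noteq> a)] ! (Suc k + j))) \<psi> (y ! m \<noteq> a)
        = ?S (y ! m \<noteq> a)"
      by (rule xor_conv_cong) (simp add: nth_list_update)
    then show ?thesis
      using Suc(1)[of "Suc k" "y[k := a, m := (y ! m \<noteq> a)]"] Suc(2,4) km by simp
  qed
  have "?F (Suc k) ?R y = (\<Sum>a\<in>UNIV. G (y ! k) a * ?R (y[k := a, m := (y ! m \<noteq> a)]))"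
    using apply_gate1[of y "Suc m" "Suc k" G] apply_CNOT_last[of _ m "Suc k"] Suc(4) km
    by (simp add: nth_list_update)
  also have "\<dots> = ?c * (\<Sum>a\<in>UNIV. G (y ! k) a * ?S (y ! m \<noteq> a))"
    unfolding IH sum_distrib_left by (simp only: ac_simps)
  also have "\<dots> = ?c * xor_conv (m - k) (\<lambda>j a. G (y ! (k + j)) a) \<psi> (y ! m)"
    unfolding Suc_diff_Suc[OF km, symmetric] xor_conv_Suc by (simp add: ac_simps)
  moreover have "[Suc k..<m+1] = Suc k # [Suc (Suc k)..<m+1]"
    using km by (simp add: upt_conv_Cons)
  ultimately show ?case
    by (simp only: foldr_Cons o_apply)
qed

lemma expX_dagger_plus: "cnj (expX t False c) + cnj (expX t True c) = cis t"
  by (cases c) (simp_all add: expX_def kdelta_def pauliX_def complex_eq_iff)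

lemma expX_dagger_minus: "cnj (expX t False c) - cnj (expX t True c) = (if c then -1 else 1) * cis (- t)"
  by (cases c) (simp_all add: expX_def kdelta_def pauliX_def complex_eq_iff)

lemma A_dagger_plus: "cnj (A_op t False c) + cnj (A_op t True c) = cis (if c then t else 0)"
  by (cases c) (simp_all add: A_op_def expX_def kdelta_def pauliX_def complex_eq_iff)

lemma A_dagger_minus:
  "cnj (A_op t False c) - cnj (A_op t True c) = (if c then -1 else 1) * cis (- (if c then t else 0))"
  by (cases c) (simp_all add: A_op_def expX_def kdelta_def pauliX_def complex_eq_iff)

subsection \<open>The two sides in closed form\<close>

lemma M_dagger_CNOT_ladder:
  assumes "length x = m"
  shows "apply_op (m+1) (on_first m (dagger (M_op m \<theta>)))
           (prod_apply m (\<lambda>i v. apply_op (m+1) (CNOT i (m+1)) v) (plus_psi m \<psi>)) (x @ [b])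
     = complex_of_real ((1 / sqrt 2) ^ m) *
       xor_conv m (\<lambda>j a. cnj (expX (if x ! ((j + m - 1) mod m) then \<theta> else 0) a (x ! j))) \<psi> b"
    (is "apply_op _ ?U ?W _ = ?c * xor_conv m ?f \<psi> b")
proof -
  have W: "?W (w @ [a]) = ?c * \<psi> (a \<noteq> parity w)" if "w \<in> basis m" for w a
    using CNOT_ladder_plus_psi[of 0 m "w @ [a]" \<psi>] that
    by (simp add: prod_apply_def basis_def nth_append del: upt_Suc)
  have "apply_op (m+1) ?U ?W (x @ [b])
     = (\<Sum>a\<in>UNIV. \<Sum>w\<in>basis m. dagger (M_op m \<theta>) x w * kdelta b a * ?W (w @ [a]))"
    unfolding apply_op_def on_first_def Suc_eq_plus1[symmetric] sum_basis_Suc_snoc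
    by (intro sum.cong refl) (auto simp: basis_def nth_append assms)
  also have "\<dots> = (\<Sum>w\<in>basis m. dagger (M_op m \<theta>) x w * ?W (w @ [b]))"
    by (subst sum.swap) (cases b; simp add: kdelta_def UNIV_bool)
  also have "\<dots> = ?c * xor_conv m ?f \<psi> b"
    unfolding xor_conv_def sum_distrib_left using W
    by (auto simp: dagger_def M_op_def intro!: sum.cong)
  finally show ?thesis .
qed

lemma A_dagger_CNOT_ladder:
  assumes "length x = m"
  shows "prod_apply m (\<lambda>i v. apply_op (m+1) (gate1 (m+1) i (dagger (A_op \<theta>)))
                             (apply_op (m+1) (CNOT i (m+1)) v)) (plus_psi m \<psi>) (x @ [b])
     = complex_of_real ((1 / sqrt 2) ^ m) * xor_conv m (\<lambda>j a. cnj (A_op \<theta> a (x ! j))) \<psi> b"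
proof -
  have "xor_conv m (\<lambda>j. dagger (A_op \<theta>) ((x @ [b]) ! j)) \<psi> ((x @ [b]) ! m)
      = xor_conv m (\<lambda>j a. cnj (A_op \<theta> a (x ! j))) \<psi> b"
    using assms by (auto simp: dagger_def nth_append intro!: xor_conv_cong)
  then show ?thesis
    using gate_CNOT_ladder_plus_psi[of 0 m "x @ [b]" "dagger (A_op \<theta>)" \<psi>] assms
    by (simp add: prod_apply_def del: upt_Suc)
qed

lemma xor_conv_M_dagger_eq_A_dagger:
  assumes "m \<ge> 1"
  shows "xor_conv m (\<lambda>j a. cnj (expX (if x ! ((j + m - 1) mod m) then \<theta> else 0) a (x ! j))) \<psi> b
       = xor_conv m (\<lambda>j a. cnj (A_op \<theta> a (x ! j))) \<psi> b"
proof (rule xor_conv_eqI)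
  show "(\<Prod>j<m. cnj (expX (if x ! ((j + m - 1) mod m) then \<theta> else 0) False (x ! j))
             + cnj (expX (if x ! ((j + m - 1) mod m) then \<theta> else 0) True (x ! j)))
      = (\<Prod>j<m. cnj (A_op \<theta> False (x ! j)) + cnj (A_op \<theta> True (x ! j)))"
    using prod_lessThan_rotate[OF assms, of "\<lambda>i. cis (if x ! i then \<theta> else 0)"]
    by (simp add: expX_dagger_plus A_dagger_plus)
  show "(\<Prod>j<m. cnj (expX (if x ! ((j + m - 1) mod m) then \<theta> else 0) False (x ! j))
             - cnj (expX (if x ! ((j + m - 1) mod m) then \<theta> else 0) True (x ! j)))
      = (\<Prod>j<m. cnj (A_op \<theta> False (x ! j)) - cnj (A_op \<theta> True (x ! j)))"
    using prod_lessThan_rotate[OF assms, of "\<lambda>i. cis (- (if x ! i then \<theta> else 0))"]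
    by (simp add: expX_dagger_minus A_dagger_minus prod.distrib)
qed

theorem lemma4p4:
  fixes \<theta> :: real and m :: nat and x :: "bool list" and \<psi> :: "bool \<Rightarrow> complex"
  assumes "m \<ge> 1"
    and "length x = m"
    and "(cmod (\<psi> False))\<^sup>2 + (cmod (\<psi> True))\<^sup>2 = 1"
  shows "partial_bra x
           (apply_op (m+1) (on_first m (dagger (M_op m \<theta>)))
             (prod_apply m (\<lambda>i v. apply_op (m+1) (CNOT i (m+1)) v) (plus_psi m \<psi>)))
       = partial_bra x
           (prod_apply m (\<lambda>i v. apply_op (m+1) (gate1 (m+1) i (dagger (A_op \<theta>)))
                                   (apply_op (m+1) (CNOT i (m+1)) v)) (plus_psi m \<psi>))"
  unfolding partial_bra_def
  using M_dagger_CNOT_ladder[OF assms(2)] A_dagger_CNOT_ladder[OF assms(2)]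
    xor_conv_M_dagger_eq_A_dagger[OF assms(1)]
  by simp

end
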